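(* Let $\dot{\mathcal H}$ be the point (bound-state) subspace of the Hydrogen atom Hamiltonian as described in the context, and let $0\neq|\psi\rangle\in\dot{\mathcal H}$. Then for each $0<q<1$, $D^+_{\mu_{|\psi\rangle}}(q)\le \tfrac13$.
   Context: The Hydrogen atom Hamiltonian is $H=-\Delta-\kappa/|x|$ acting in $\mathrm{L}^2(\mathbb R^3)$, $\kappa>0$. Its eigenvalues are $\lambda_n=-\Lambda/n^2$, $n=1,2,\dots$, with $\Lambda=\kappa^2/4$, each of multiplicity $n^2$, with orthonormal eigenfunctions $|n,l,m\rangle$, $l=0,\dots,n-1$, $m=-l,\dots,l$. $\dot{\mathcal H}$ denotes the closed subspace spanned by all $|n,l,m\rangle$. For $|\psi\rangle=\sum a_{n,l,m}|n,l,m\rangle\in\dot{\mathcal H}$ its spectral measure is $\mu_{|\psi\rangle}=\sum_{n,l,m}|a_{n,l,m}|^2\delta_{\lambda_n}$. For a finite positive Borel measure $\mu$ on $\mathbb R$ and $q>0$, $q\neq1$, set $I_\mu(q,\epsilon)=\int_{\{x:\mu(B(x,\epsilon))>0\}}\mu(B(x,\epsilon))^{q-1}\,d\mu(x)$ with $B(x,\epsilon)=(x-\epsilon,x+\epsilon)$, and define the upper generalized fractal dimension $D^+_\mu(q)=\limsup_{\epsilon\downarrow0}\frac{\ln I_\mu(q,\epsilon)}{(q-1)\ln\epsilon}$. *)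

theory Defs
  imports "HOL-Analysis.Analysis"
begin

definition hyd_index :: "(nat \<times> nat \<times> int) set" where
  "hyd_index = {(n, l, m). 1 \<le> n \<and> l < n \<and> \<bar>m\<bar> \<le> int l}"

definition hyd_eigenvalue :: "real \<Rightarrow> nat \<Rightarrow> real" where
  "hyd_eigenvalue \<kappa> n = - ((\<kappa>^2 / 4) / (real n)^2)"

text \<open>Spectral measure of psi = sum a_{n,l,m} |n,l,m>:
  mu = sum |a_{n,l,m}|^2 delta_{lambda_n}, as a Borel measure on the reals
  (push-forward of the weighted counting measure on the index set).\<close>
definition hyd_spectral_measure ::
    "real \<Rightarrow> (nat \<times> nat \<times> int \<Rightarrow> complex) \<Rightarrow> real measure" where
  "hyd_spectral_measure \<kappa> a =
     distr (density (count_space hyd_index) (\<lambda>i. ennreal ((cmod (a i))^2))) borel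
           (\<lambda>(n, l, m). hyd_eigenvalue \<kappa> n)"

definition gen_I :: "real measure \<Rightarrow> real \<Rightarrow> real \<Rightarrow> real" where
  "gen_I \<mu> q \<epsilon> =
     (LINT x : {x. measure \<mu> {x - \<epsilon> <..< x + \<epsilon>} > 0} | \<mu>.
        (measure \<mu> {x - \<epsilon> <..< x + \<epsilon>}) powr (q - 1))"

definition upper_gen_dim :: "real measure \<Rightarrow> real \<Rightarrow> ereal" where
  "upper_gen_dim \<mu> q =
     Limsup (at_right 0) (\<lambda>\<epsilon>. ereal (ln (gen_I \<mu> q \<epsilon>) / ((q - 1) * ln \<epsilon>)))"

end

theory Submission
  imports Defs
begin

text \<open>The eigenvalues \<open>-\<Lambda>/n\<^sup>2\<close> accumulate only at \<open>0\<close>, so at scale \<open>\<epsilon>\<close> they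
  occupy few of the cells \<open>[k\<epsilon>, (k+1)\<epsilon>)\<close>: the first \<open>N \<approx> \<epsilon>\<^sup>-\<^sup>1\<^sup>/\<^sup>3\<close> of them
  occupy at most \<open>N\<close> cells, and all others lie in an interval of length
  \<open>\<Lambda>/N\<^sup>2 \<approx> \<Lambda>\<epsilon>\<^sup>2\<^sup>/\<^sup>3\<close>, which meets about \<open>\<Lambda>\<epsilon>\<^sup>-\<^sup>1\<^sup>/\<^sup>3\<close> cells.
  Since \<open>B(x,\<epsilon>)\<close> contains the cell of \<open>x\<close> and \<open>q - 1 < 0\<close>, \<open>I\<^sub>\<mu>(q,\<epsilon>)\<close> is at most
  the sum of \<open>\<mu>(cell)\<^sup>q\<close> over the occupied cells, and by concavity of \<open>t \<mapsto> t\<^sup>q\<close>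
  this is at most \<open>(#cells)\<^sup>1\<^sup>-\<^sup>q \<mu>(\<real>)\<^sup>q = O(\<epsilon>\<^sup>(\<^sup>q\<^sup>-\<^sup>1\<^sup>)\<^sup>/\<^sup>3)\<close>.
  Dividing the logarithm by \<open>(q - 1) ln \<epsilon> > 0\<close> gives \<open>D\<^sup>+ \<le> 1/3\<close>.\<close>

lemma sum_powr_le_card_powr_sum:
  fixes x :: "'a \<Rightarrow> real"
  assumes K: "finite K" and nonneg: "\<And>k. k \<in> K \<Longrightarrow> 0 \<le> x k" and q: "0 < q" "q < 1"
  shows "(\<Sum>k\<in>K. x k powr q) \<le> real (card K) powr (1 - q) * (\<Sum>k\<in>K. x k) powr q"
proof (cases "(\<Sum>k\<in>K. x k) = 0")
  case True
  then show ?thesis using K nonneg by (simp add: sum_nonneg_eq_0_iff)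
next
  case False
  define S where "S = (\<Sum>k\<in>K. x k)"
  define n where "n = real (card K)"
  define c where "c = S / n"
  have "S > 0" using False nonneg by (simp add: S_def order_less_le sum_nonneg)
  moreover have "n > 0" using False K by (simp add: n_def card_gt_0_iff) (metis sum.empty)
  ultimately have "c > 0" by (simp add: c_def)
  have tangent: "x k powr q \<le> c powr (q - 1) * (q * x k + (1 - q) * c)" if "k \<in> K" for k
  proof (cases "x k = 0")
    case True
    then show ?thesis using \<open>c > 0\<close> q by simp
  next
    case False
    then have "x k powr q * c powr (1 - q) \<le> q * x k + (1 - q) * c"
      using Youngs_inequality_0[of q "1 - q" "x k" c] nonneg[OF that] \<open>c > 0\<close> q by simp
    then have "c powr (q - 1) * (x k powr q * c powr (1 - q)) \<le> c powr (q - 1) * (q * x k + (1 - q) * c)"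
      by (simp add: mult_left_mono)
    moreover have "c powr (q - 1) * (x k powr q * c powr (1 - q)) = x k powr q"
      using \<open>c > 0\<close> by (simp add: powr_add[symmetric])
    ultimately show ?thesis by simp
  qed
  have "(\<Sum>k\<in>K. x k powr q) \<le> (\<Sum>k\<in>K. c powr (q - 1) * (q * x k + (1 - q) * c))"
    by (intro sum_mono tangent)
  also have "\<dots> = c powr (q - 1) * (\<Sum>k\<in>K. q * x k + (1 - q) * c)"
    by (simp add: sum_distrib_left)
  also have "\<dots> = c powr (q - 1) * (q * S + (1 - q) * c * n)"
    by (simp add: sum.distrib sum_distrib_left[symmetric] S_def n_def)
  also have "\<dots> = c powr (q - 1) * S"
  proof -
    have "c * n = S" using \<open>n > 0\<close> by (simp add: c_def)
    then show ?thesis by (simp add: mult.assoc left_diff_distrib)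
  qed
  also have "\<dots> = n powr (1 - q) * S powr q"
    using \<open>n > 0\<close> \<open>S > 0\<close>
    by (simp add: c_def powr_divide powr_diff powr_add field_simps)
  finally show ?thesis by (simp add: n_def S_def)
qed

definition cell :: "real \<Rightarrow> int \<Rightarrow> real set" where
  "cell \<epsilon> k = {real_of_int k * \<epsilon> ..< (real_of_int k + 1) * \<epsilon>}"

lemma mem_cell_iff: "0 < \<epsilon> \<Longrightarrow> x \<in> cell \<epsilon> k \<longleftrightarrow> \<lfloor>x / \<epsilon>\<rfloor> = k"
  by (simp add: cell_def floor_eq_iff pos_le_divide_eq pos_divide_less_eq)

lemma cell_subset_ball: "x \<in> cell \<epsilon> k \<Longrightarrow> cell \<epsilon> k \<subseteq> {x - \<epsilon> <..< x + \<epsilon>}"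
  by (auto simp: cell_def algebra_simps)

lemma borel_cell [measurable]: "cell \<epsilon> k \<in> sets borel"
  by (simp add: cell_def)

lemma integral_le_nn_integral_bound:
  fixes g h :: "'a \<Rightarrow> real"
  assumes "\<And>x. 0 \<le> g x" and "AE x in M. g x \<le> h x"
    and "(\<integral>\<^sup>+x. ennreal (h x) \<partial>M) = ennreal r" and "0 \<le> r"
  shows "integral\<^sup>L M g \<le> r"
proof (cases "integrable M g")
  case True
  then have "integral\<^sup>L M g = enn2real (\<integral>\<^sup>+x. ennreal (g x) \<partial>M)"
    using assms(1) by (intro integral_eq_nn_integral) auto
  also have "\<dots> \<le> enn2real (\<integral>\<^sup>+x. ennreal (h x) \<partial>M)"
    using assms(2,3) by (intro enn2real_mono nn_integral_mono_AE) (auto elim!: eventually_mono intro: ennreal_leI)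
  finally show ?thesis using assms(3,4) by simp
next
  case False
  then show ?thesis using assms(4) by (simp add: not_integrable_integral_eq)
qed

lemma gen_I_nonneg: "0 \<le> gen_I \<mu> q \<epsilon>"
  unfolding gen_I_def set_lebesgue_integral_def
  by (rule Bochner_Integration.integral_nonneg) (simp add: indicator_def)

lemma AE_ball_powr_le_cell_powr:
  fixes \<mu> :: "real measure"
  assumes "finite_measure \<mu>" and sets: "sets \<mu> = sets borel" and \<epsilon>: "0 < \<epsilon>" and q: "q \<le> 1"
    and K: "finite K" and AE_K: "AE x in \<mu>. \<lfloor>x / \<epsilon>\<rfloor> \<in> K"
  shows "AE x in \<mu>. indicator {x. 0 < measure \<mu> {x - \<epsilon> <..< x + \<epsilon>}} x
      *\<^sub>R measure \<mu> {x - \<epsilon> <..< x + \<epsilon>} powr (q - 1)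
    \<le> (\<Sum>k\<in>K. measure \<mu> (cell \<epsilon> k) powr (q - 1) * indicator (cell \<epsilon> k) x)"
proof -
  interpret finite_measure \<mu> by fact
  define m where "m k = measure \<mu> (cell \<epsilon> k)" for k
  define f where "f x = measure \<mu> {x - \<epsilon> <..< x + \<epsilon>}" for x
  \<comment> \<open>a.e. \<open>x\<close> lies in a cell of positive measure, and that cell is inside \<open>B(x,\<epsilon>)\<close>\<close>
  have "AE x in \<mu>. \<forall>k\<in>K. m k = 0 \<longrightarrow> x \<notin> cell \<epsilon> k"
  proof (rule AE_finite_allI[OF K])
    fix k
    show "AE x in \<mu>. m k = 0 \<longrightarrow> x \<notin> cell \<epsilon> k"
    proof (cases "m k = 0")
      case True
      then have "cell \<epsilon> k \<in> null_sets \<mu>"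
        using sets by (simp add: m_def emeasure_eq_measure null_sets_def)
      from AE_not_in[OF this] show ?thesis by (rule eventually_mono) simp
    qed simp
  qed
  then have "AE x in \<mu>. indicator {x. f x > 0} x *\<^sub>R f x powr (q - 1)
      \<le> (\<Sum>k\<in>K. m k powr (q - 1) * indicator (cell \<epsilon> k) x)"
    using AE_K
  proof eventually_elim
    case (elim x)
    define k where "k = \<lfloor>x / \<epsilon>\<rfloor>"
    have x: "x \<in> cell \<epsilon> k" and "k \<in> K" using elim \<epsilon> by (simp_all add: k_def mem_cell_iff)
    then have "m k > 0" using elim by (auto simp: m_def order_less_le)
    moreover have "m k \<le> f x"
      unfolding m_def f_def using cell_subset_ball[OF x] sets by (intro finite_measure_mono) auto
    ultimately have "indicator {x. f x > 0} x *\<^sub>R f x powr (q - 1) \<le> m k powr (q - 1)"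
      using q by (simp add: powr_mono2')
    moreover have "{k' \<in> K. x \<in> cell \<epsilon> k'} = {k}"
      using \<open>k \<in> K\<close> \<epsilon> by (auto simp: mem_cell_iff k_def)
    then have "(\<Sum>k\<in>K. m k powr (q - 1) * indicator (cell \<epsilon> k) x) = m k powr (q - 1)"
      using sum.inter_filter[OF K, of "\<lambda>k. m k powr (q - 1)" "\<lambda>k. x \<in> cell \<epsilon> k"]
      by (simp add: indicator_def of_bool_def if_distrib cong: if_cong)
    ultimately show ?case by simp
  qed
  then show ?thesis by (simp add: m_def f_def)
qed

lemma gen_I_le_sum_cell_powr:
  fixes \<mu> :: "real measure"
  assumes "finite_measure \<mu>" and sets: "sets \<mu> = sets borel" and \<epsilon>: "0 < \<epsilon>" and q: "q \<le> 1"
    and K: "finite K" and AE_K: "AE x in \<mu>. \<lfloor>x / \<epsilon>\<rfloor> \<in> K"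
  shows "gen_I \<mu> q \<epsilon> \<le> (\<Sum>k\<in>K. measure \<mu> (cell \<epsilon> k) powr q)"
proof -
  interpret finite_measure \<mu> by fact
  define m where "m k = measure \<mu> (cell \<epsilon> k)" for k
  define f where "f x = measure \<mu> {x - \<epsilon> <..< x + \<epsilon>}" for x
  define g where "g x = indicator {x. f x > 0} x *\<^sub>R f x powr (q - 1)" for x
  define h where "h x = (\<Sum>k\<in>K. m k powr (q - 1) * indicator (cell \<epsilon> k) x)" for x
  have g_le_h: "AE x in \<mu>. g x \<le> h x"
    using AE_ball_powr_le_cell_powr[OF assms] by (simp add: g_def h_def f_def m_def)
  have "(\<integral>\<^sup>+x. ennreal (h x) \<partial>\<mu>)
      = (\<integral>\<^sup>+x. (\<Sum>k\<in>K. ennreal (m k powr (q - 1)) * indicator (cell \<epsilon> k) x) \<partial>\<mu>)"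
    unfolding h_def
    by (intro nn_integral_cong) (simp add: sum_ennreal[symmetric] ennreal_mult' ennreal_indicator)
  also have "\<dots> = (\<Sum>k\<in>K. ennreal (m k powr (q - 1)) * emeasure \<mu> (cell \<epsilon> k))"
    using sets by (simp add: nn_integral_sum nn_integral_cmult_indicator)
  also have "\<dots> = (\<Sum>k\<in>K. ennreal (m k powr (q - 1) * m k))"
    by (simp add: emeasure_eq_measure m_def ennreal_mult')
  also have "\<dots> = ennreal (\<Sum>k\<in>K. m k powr q)"
    by (simp add: sum_ennreal m_def powr_mult_base[of _ "q - 1"] mult.commute)
  finally have h_integral: "(\<integral>\<^sup>+x. ennreal (h x) \<partial>\<mu>) = ennreal (\<Sum>k\<in>K. m k powr q)" .
  have "0 \<le> g x" for x by (simp add: g_def)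
  then have "integral\<^sup>L \<mu> g \<le> (\<Sum>k\<in>K. m k powr q)"
    using g_le_h h_integral by (rule integral_le_nn_integral_bound) (simp add: sum_nonneg)
  moreover have "gen_I \<mu> q \<epsilon> = integral\<^sup>L \<mu> g"
    unfolding gen_I_def set_lebesgue_integral_def g_def[abs_def] f_def by simp
  ultimately show ?thesis by (simp add: m_def)
qed

lemma gen_I_le_card_powr:
  fixes \<mu> :: "real measure"
  assumes "finite_measure \<mu>" and sets: "sets \<mu> = sets borel" and \<epsilon>: "0 < \<epsilon>"
    and q: "0 < q" "q < 1" and K: "finite K" and AE_K: "AE x in \<mu>. \<lfloor>x / \<epsilon>\<rfloor> \<in> K"
  shows "gen_I \<mu> q \<epsilon> \<le> real (card K) powr (1 - q) * measure \<mu> UNIV powr q"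
proof -
  interpret finite_measure \<mu> by fact
  have "disjoint_family_on (cell \<epsilon>) K"
    using \<epsilon> unfolding disjoint_family_on_def by (auto simp: mem_cell_iff)
  moreover have "cell \<epsilon> ` K \<subseteq> sets \<mu>"
    using sets by (simp add: image_subset_iff)
  ultimately have "(\<Sum>k\<in>K. measure \<mu> (cell \<epsilon> k)) = measure \<mu> (\<Union>k\<in>K. cell \<epsilon> k)"
    using finite_measure_finite_Union[OF K] by simp
  also have "\<dots> \<le> measure \<mu> UNIV"
    using bounded_measure[of "\<Union>k\<in>K. cell \<epsilon> k"] sets_eq_imp_space_eq[OF sets] by simp
  finally have cells_le: "(\<Sum>k\<in>K. measure \<mu> (cell \<epsilon> k)) \<le> measure \<mu> UNIV" .
  have "gen_I \<mu> q \<epsilon> \<le> (\<Sum>k\<in>K. measure \<mu> (cell \<epsilon> k) powr q)"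
    using q by (intro gen_I_le_sum_cell_powr[OF assms(1-3) _ K AE_K]) simp
  also have "\<dots> \<le> real (card K) powr (1 - q) * (\<Sum>k\<in>K. measure \<mu> (cell \<epsilon> k)) powr q"
    using K q by (intro sum_powr_le_card_powr_sum) simp_all
  also have "\<dots> \<le> real (card K) powr (1 - q) * measure \<mu> UNIV powr q"
    using cells_le q by (intro mult_left_mono powr_mono2) (simp_all add: sum_nonneg)
  finally show ?thesis .
qed

lemma floor_divide_image_subset:
  fixes S :: "real set"
  assumes "0 < \<epsilon>" and S: "S \<subseteq> {-c..<0}"
  shows "(\<lambda>x. \<lfloor>x / \<epsilon>\<rfloor>) ` S \<subseteq> {\<lfloor>-c / \<epsilon>\<rfloor>..-1}"
proof
  fix k assume "k \<in> (\<lambda>x. \<lfloor>x / \<epsilon>\<rfloor>) ` S"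
  then obtain x where "x \<in> S" and k: "k = \<lfloor>x / \<epsilon>\<rfloor>" by blast
  then have "-c \<le> x" and "x < 0" using S by auto
  then have "-c / \<epsilon> \<le> x / \<epsilon>" and "x / \<epsilon> < 0"
    using \<open>0 < \<epsilon>\<close> divide_right_mono[of "-c" x \<epsilon>] by (simp_all add: divide_neg_pos)
  then have "\<lfloor>-c / \<epsilon>\<rfloor> \<le> k" and "k < 0"
    unfolding k by (simp_all add: floor_mono floor_less_iff)
  then show "k \<in> {\<lfloor>-c / \<epsilon>\<rfloor>..-1}" by simp
qed

lemma card_floor_divide_image_le:
  fixes S :: "real set"
  assumes "0 < \<epsilon>" and "0 \<le> c" and "S \<subseteq> {-c..<0}"
  shows "real (card ((\<lambda>x. \<lfloor>x / \<epsilon>\<rfloor>) ` S)) \<le> c / \<epsilon> + 1"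
proof -
  have "card ((\<lambda>x. \<lfloor>x / \<epsilon>\<rfloor>) ` S) \<le> card {\<lfloor>-c / \<epsilon>\<rfloor>..-1}"
    using floor_divide_image_subset[OF assms(1,3)] by (intro card_mono) auto
  also have "\<dots> = nat \<lceil>c / \<epsilon>\<rceil>"
    by (simp add: ceiling_def)
  also have "real \<dots> = of_int \<lceil>c / \<epsilon>\<rceil>"
    using assms(1,2) by simp
  finally show ?thesis
    using of_int_ceiling_le_add_one[of "c / \<epsilon>"] by linarith
qed

lemma one_div_sq_mult_le_powr_neg_third:
  fixes \<epsilon> x :: real
  assumes "0 < \<epsilon>" and "\<epsilon> powr (-1/3) \<le> x"
  shows "1 / (x\<^sup>2 * \<epsilon>) \<le> \<epsilon> powr (-1/3)"
proof -
  define t where "t = \<epsilon> powr (-1/3)"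
  have "t > 0" using assms(1) by (simp add: t_def)
  have "t ^ 3 * \<epsilon> = 1"
    using assms(1) by (simp add: t_def powr_power powr_minus field_simps)
  then have t_sq: "t\<^sup>2 * \<epsilon> = 1 / t"
    using \<open>t > 0\<close> by (simp add: power2_eq_square power3_eq_cube field_simps)
  have le: "t\<^sup>2 * \<epsilon> \<le> x\<^sup>2 * \<epsilon>"
    using assms \<open>t > 0\<close> by (intro mult_right_mono power_mono) (simp_all add: t_def)
  have pos: "0 < t\<^sup>2 * \<epsilon>"
    using \<open>t > 0\<close> assms(1) by simp
  then have "0 < x\<^sup>2 * \<epsilon> * (t\<^sup>2 * \<epsilon>)"
    using le by (simp add: mult_pos_pos)
  then have "1 / (x\<^sup>2 * \<epsilon>) \<le> 1 / (t\<^sup>2 * \<epsilon>)"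
    using le by (intro divide_left_mono) simp_all
  also have "\<dots> = t"
    using t_sq by simp
  finally show ?thesis by (simp add: t_def)
qed

lemma hyd_eigenvalue_tail_subset:
  assumes "\<kappa> \<noteq> 0"
  shows "hyd_eigenvalue \<kappa> ` {N<..} \<subseteq> {-(\<kappa>\<^sup>2 / 4 / (real N + 1)\<^sup>2)..<0}"
proof
  fix x assume "x \<in> hyd_eigenvalue \<kappa> ` {N<..}"
  then obtain n where "N < n" and x: "x = - (\<kappa>\<^sup>2 / 4 / (real n)\<^sup>2)"
    by (auto simp: hyd_eigenvalue_def)
  then have "(real N + 1)\<^sup>2 \<le> (real n)\<^sup>2" by (intro power_mono) auto
  then show "x \<in> {-(\<kappa>\<^sup>2 / 4 / (real N + 1)\<^sup>2)..<0}"
    using assms \<open>N < n\<close> by (auto simp: x intro!: divide_left_mono)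
qed

lemma hyd_eigenvalue_cells:
  fixes \<kappa> \<epsilon> :: real
  assumes "\<kappa> \<noteq> 0" and \<epsilon>: "0 < \<epsilon>" "\<epsilon> \<le> 1"
  defines "K \<equiv> (\<lambda>n. \<lfloor>hyd_eigenvalue \<kappa> n / \<epsilon>\<rfloor>) ` {1..}"
  shows "finite K" and "real (card K) \<le> (2 + \<kappa>\<^sup>2 / 4) * \<epsilon> powr (-1/3)"
proof -
  define L where "L = \<kappa>\<^sup>2 / 4"
  have "L > 0" using assms(1) by (simp add: L_def)
  define t where "t = \<epsilon> powr (-1/3)"
  have "\<epsilon> powr (1/3) \<le> 1" using \<epsilon> by (intro powr_le1) auto
  then have "t \<ge> 1" using \<epsilon> by (simp add: t_def powr_minus_divide)
  define N where "N = nat \<lfloor>t\<rfloor>"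
  have N: "real N \<le> t" "t < real N + 1" using \<open>t \<ge> 1\<close> by (simp_all add: N_def)
  define c where "c = L / (real N + 1)\<^sup>2"
  define tail where "tail = hyd_eigenvalue \<kappa> ` {N<..}"
  have tail: "tail \<subseteq> {-c..<0}"
    using hyd_eigenvalue_tail_subset[OF assms(1)] by (simp add: tail_def c_def L_def)
  have "1 / ((real N + 1)\<^sup>2 * \<epsilon>) \<le> t"
    using N(2) unfolding t_def by (intro one_div_sq_mult_le_powr_neg_third[OF \<epsilon>(1)]) simp
  then have "L * (1 / ((real N + 1)\<^sup>2 * \<epsilon>)) \<le> L * t"
    using \<open>L > 0\<close> by (intro mult_left_mono) simp_all
  then have "c / \<epsilon> \<le> L * t" by (simp add: c_def)
  define head where "head = (\<lambda>n. \<lfloor>hyd_eigenvalue \<kappa> n / \<epsilon>\<rfloor>) ` {1..N}"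
  define tail_cells where "tail_cells = (\<lambda>x. \<lfloor>x / \<epsilon>\<rfloor>) ` tail"
  have "finite head" by (simp add: head_def)
  moreover have "finite tail_cells"
    using floor_divide_image_subset[OF \<epsilon>(1) tail] unfolding tail_cells_def
    by (rule finite_subset) simp
  moreover have K_sub: "K \<subseteq> head \<union> tail_cells"
  proof
    fix k assume "k \<in> K"
    then obtain n where "1 \<le> n" and "k = \<lfloor>hyd_eigenvalue \<kappa> n / \<epsilon>\<rfloor>" by (auto simp: K_def)
    then show "k \<in> head \<union> tail_cells"
      by (cases "n \<le> N") (auto simp: head_def tail_cells_def tail_def)
  qed
  ultimately show "finite K"
    by (meson finite_UnI finite_subset)
  have "card K \<le> card head + card tail_cells"
    using K_sub \<open>finite head\<close> \<open>finite tail_cells\<close>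
    by (intro order_trans[OF card_mono card_Un_le]) auto
  also have "card head \<le> N"
    using card_image_le[of "{1..N}"] by (simp add: head_def)
  finally have "real (card K) \<le> real N + real (card tail_cells)"
    by (metis add_le_mono1 of_nat_add of_nat_mono)
  moreover have "real (card tail_cells) \<le> c / \<epsilon> + 1"
    using card_floor_divide_image_le[OF \<epsilon>(1) _ tail] \<open>L > 0\<close> by (simp add: c_def tail_cells_def)
  ultimately have "real (card K) \<le> t + L * t + 1"
    using N \<open>c / \<epsilon> \<le> L * t\<close> by linarith
  then show "real (card K) \<le> (2 + \<kappa>\<^sup>2 / 4) * \<epsilon> powr (-1/3)"
    using \<open>t \<ge> 1\<close> by (simp add: L_def t_def algebra_simps)
qed

lemma sets_hyd_spectral_measure [simp]:
  "sets (hyd_spectral_measure \<kappa> a) = sets borel"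
  by (simp add: hyd_spectral_measure_def)

lemma finite_measure_hyd_spectral_measure:
  assumes "(\<lambda>i. (cmod (a i))\<^sup>2) summable_on hyd_index"
  shows "finite_measure (hyd_spectral_measure \<kappa> a)"
proof -
  define w where "w i = (cmod (a i))\<^sup>2" for i
  define N where "N = density (count_space hyd_index) (\<lambda>i. ennreal (w i))"
  have "Infinite_Sum.abs_summable_on w hyd_index"
    using assms by (simp add: w_def)
  then have "Infinite_Set_Sum.abs_summable_on w hyd_index"
    using abs_summable_equivalent by blast
  then have "(\<integral>\<^sup>+i. ennreal (w i) \<partial>count_space hyd_index) < \<infinity>"
    by (simp add: abs_summable_on_def integrable_iff_bounded w_def)
  moreover have "emeasure N (space N) = (\<integral>\<^sup>+i. ennreal (w i) \<partial>count_space hyd_index)"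
    unfolding N_def by (auto simp: emeasure_density intro!: nn_integral_cong)
  ultimately have "emeasure N (space N) \<noteq> \<infinity>" by simp
  then have "finite_measure N" by (rule finite_measureI)
  then show ?thesis
    unfolding hyd_spectral_measure_def w_def[symmetric] N_def[symmetric]
    by (rule finite_measure.finite_measure_distr) (simp add: N_def measurable_count_space_eq1)
qed

lemma AE_hyd_spectral_measure_eigenvalue:
  "AE x in hyd_spectral_measure \<kappa> a. x \<in> hyd_eigenvalue \<kappa> ` {1..}"
proof -
  define N where "N = density (count_space hyd_index) (\<lambda>i. ennreal ((cmod (a i))\<^sup>2))"
  define ev where "ev = (\<lambda>(n::nat, l::nat, m::int). hyd_eigenvalue \<kappa> n)"
  have eigenvalue_measurable: "ev \<in> measurable N borel"
    by (simp add: N_def measurable_count_space_eq1)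
  have "countable (hyd_eigenvalue \<kappa> ` {1..})"
    by (intro countable_image countableI_type)
  then have "hyd_eigenvalue \<kappa> ` {1..} \<in> sets borel"
    by (rule sets.countable[rotated]) simp
  moreover have "AE i in N. ev i \<in> hyd_eigenvalue \<kappa> ` {1..}"
    by (rule AE_I2) (auto simp: N_def ev_def hyd_index_def)
  ultimately show ?thesis
    unfolding hyd_spectral_measure_def N_def[symmetric] ev_def[symmetric]
    by (subst AE_distr_iff[OF eigenvalue_measurable]) simp_all
qed

lemma gen_I_hyd_spectral_measure_le:
  fixes \<kappa> :: real and a :: "nat \<times> nat \<times> int \<Rightarrow> complex"
  assumes "\<kappa> \<noteq> 0" and summable: "(\<lambda>i. (cmod (a i))\<^sup>2) summable_on hyd_index"
    and q: "0 < q" "q < 1" and \<epsilon>: "0 < \<epsilon>" "\<epsilon> \<le> 1"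
  shows "gen_I (hyd_spectral_measure \<kappa> a) q \<epsilon>
    \<le> (2 + \<kappa>\<^sup>2 / 4) powr (1 - q) * measure (hyd_spectral_measure \<kappa> a) UNIV powr q * \<epsilon> powr ((q - 1) / 3)"
proof -
  define \<mu> where "\<mu> = hyd_spectral_measure \<kappa> a"
  define K where "K = (\<lambda>n. \<lfloor>hyd_eigenvalue \<kappa> n / \<epsilon>\<rfloor>) ` {1..}"
  have "AE x in \<mu>. \<lfloor>x / \<epsilon>\<rfloor> \<in> K"
    using AE_hyd_spectral_measure_eigenvalue[of \<kappa> a] unfolding \<mu>_def K_def
    by (rule eventually_mono) auto
  then have "gen_I \<mu> q \<epsilon> \<le> real (card K) powr (1 - q) * measure \<mu> UNIV powr q"
    using finite_measure_hyd_spectral_measure[OF summable] hyd_eigenvalue_cells(1)[OF assms(1) \<epsilon>]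
    by (intro gen_I_le_card_powr[OF _ _ \<epsilon>(1) q]) (simp_all add: \<mu>_def K_def)
  also have "\<dots> \<le> ((2 + \<kappa>\<^sup>2 / 4) * \<epsilon> powr (-1/3)) powr (1 - q) * measure \<mu> UNIV powr q"
    using hyd_eigenvalue_cells(2)[OF assms(1) \<epsilon>] q
    by (intro mult_right_mono powr_mono2) (simp_all add: K_def)
  also have "\<dots> = (2 + \<kappa>\<^sup>2 / 4) powr (1 - q) * measure \<mu> UNIV powr q * \<epsilon> powr ((q - 1) / 3)"
  proof -
    have "(\<epsilon> powr (-1/3)) powr (1 - q) = \<epsilon> powr (-1/3 * (1 - q))"
      by (rule powr_powr)
    also have "-1/3 * (1 - q) = (q - 1) / 3"
      by (simp add: field_simps)
    finally have "(\<epsilon> powr (-1/3)) powr (1 - q) = \<epsilon> powr ((q - 1) / 3)" .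
    then show ?thesis by (simp add: powr_mult mult_ac)
  qed
  finally show ?thesis by (simp add: \<mu>_def)
qed

lemma upper_gen_dim_le_of_gen_I_le:
  fixes \<mu> :: "real measure"
  assumes q: "q < 1" and "0 \<le> d"
    and bound: "eventually (\<lambda>\<epsilon>. gen_I \<mu> q \<epsilon> \<le> B * \<epsilon> powr ((q - 1) * d)) (at_right 0)"
  shows "upper_gen_dim \<mu> q \<le> ereal d"
proof -
  define A where "A = \<bar>ln B\<bar>"
  have ratio_le: "ln (gen_I \<mu> q \<epsilon>) / ((q - 1) * ln \<epsilon>) \<le> d + A / ((q - 1) * ln \<epsilon>)"
    if \<epsilon>: "0 < \<epsilon>" "\<epsilon> < 1" and I_le: "gen_I \<mu> q \<epsilon> \<le> B * \<epsilon> powr ((q - 1) * d)" for \<epsilon>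
  proof -
    define D where "D = (q - 1) * ln \<epsilon>"
    have "D > 0" using q \<epsilon> by (simp add: D_def mult_neg_neg)
    have "ln (gen_I \<mu> q \<epsilon>) \<le> A + d * D"
    proof (cases "gen_I \<mu> q \<epsilon> = 0")
      case True
      \<comment> \<open>\<open>ln 0 = 0\<close> in Isabelle, so the quotient is \<open>0\<close> here; this is why \<open>0 \<le> d\<close> is assumed\<close>
      then show ?thesis using \<open>D > 0\<close> \<open>0 \<le> d\<close> by (simp add: A_def)
    next
      case False
      then have "0 < gen_I \<mu> q \<epsilon>" using gen_I_nonneg[of \<mu> q \<epsilon>] by simp
      then have "0 < B * \<epsilon> powr ((q - 1) * d)" using I_le by linarith
      then have "0 < B" using \<epsilon> by (simp add: zero_less_mult_iff)
      have "ln (gen_I \<mu> q \<epsilon>) \<le> ln (B * \<epsilon> powr ((q - 1) * d))"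
        using \<open>0 < gen_I \<mu> q \<epsilon>\<close> I_le by simp
      also have "\<dots> = ln B + d * D"
        using \<open>0 < B\<close> \<epsilon> by (simp add: D_def ln_mult ln_powr)
      finally show ?thesis by (simp add: A_def)
    qed
    then have "ln (gen_I \<mu> q \<epsilon>) / D \<le> (A + d * D) / D"
      using \<open>D > 0\<close> by (simp add: divide_right_mono)
    also have "\<dots> = d + A / D"
      using \<open>D > 0\<close> by (simp add: field_simps)
    finally show ?thesis by (simp add: D_def)
  qed
  have "((\<lambda>\<epsilon>. A / ((q - 1) * ln \<epsilon>)) \<longlongrightarrow> 0) (at_right 0)"
    using tendsto_divide_0[OF tendsto_const[of "A / (q - 1)"] filterlim_at_bot_imp_at_infinity[OF ln_at_0]]
    by simp
  then have "((\<lambda>\<epsilon>. d + A / ((q - 1) * ln \<epsilon>)) \<longlongrightarrow> d + 0) (at_right 0)"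
    by (intro tendsto_add tendsto_const)
  then have lim: "((\<lambda>\<epsilon>. ereal (d + A / ((q - 1) * ln \<epsilon>))) \<longlongrightarrow> ereal d) (at_right 0)"
    by (simp add: tendsto_ereal)
  have "eventually (\<lambda>\<epsilon>. ereal (ln (gen_I \<mu> q \<epsilon>) / ((q - 1) * ln \<epsilon>))
      \<le> ereal (d + A / ((q - 1) * ln \<epsilon>))) (at_right 0)"
    using bound eventually_at_right_real[OF zero_less_one] by eventually_elim (simp add: ratio_le)
  then have "upper_gen_dim \<mu> q \<le> Limsup (at_right 0) (\<lambda>\<epsilon>. ereal (d + A / ((q - 1) * ln \<epsilon>)))"
    unfolding upper_gen_dim_def by (rule Limsup_mono)
  also have "\<dots> = ereal d"
    using lim by (intro lim_imp_Limsup) simp_all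
  finally show ?thesis .
qed

theorem proposition1:
  fixes \<kappa> :: real and a :: "nat \<times> nat \<times> int \<Rightarrow> complex" and q :: real
  assumes "\<kappa> > 0"
    and "(\<lambda>i. (cmod (a i))^2) summable_on hyd_index"
    and "\<exists>i\<in>hyd_index. a i \<noteq> 0"
    and "0 < q" and "q < 1"
  shows "upper_gen_dim (hyd_spectral_measure \<kappa> a) q \<le> ereal (1/3)"
proof -
  let ?\<mu> = "hyd_spectral_measure \<kappa> a"
  let ?B = "(2 + \<kappa>\<^sup>2 / 4) powr (1 - q) * measure ?\<mu> UNIV powr q"
  have "eventually (\<lambda>\<epsilon>. gen_I ?\<mu> q \<epsilon> \<le> ?B * \<epsilon> powr ((q - 1) / 3)) (at_right 0)"
    using eventually_at_right_real[OF zero_less_one]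
  proof eventually_elim
    case (elim \<epsilon>)
    then show ?case
      using assms by (intro gen_I_hyd_spectral_measure_le) auto
  qed
  then show ?thesis
    using upper_gen_dim_le_of_gen_I_le[of q "1/3" ?\<mu> ?B] \<open>q < 1\<close> by simp
qed

end
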